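(* Let $\Gamma$ be a graph on vertex set $[n]$, let $r\in\mathbb{N}$, and suppose $\Gamma$ contains a spanning subgraph $A$ which is an $r$-flower (with respect to the host graph $\Gamma$), with sets $V^1,\dots,V^{r+1}$ as in the definition. Then $A$ is $C_4$-saturated in $\Gamma$ and $$ |E(A)|=|E(A[V^{r+1}])|+\frac{3}{2}\left(n-|V^{r+1}|-r\right)+3\left(|V^2|+\ldots+|V^{r+1}|\right). $$
   Context: For a graph $A$ and $V\subseteq V(A)$, $A[V]$ is the induced subgraph and $N_{A}(v)$ the neighbourhood of $v$. A spanning subgraph $A$ of $\Gamma$ is $C_4$-saturated in $\Gamma$ if $A$ contains no copy of the $4$-cycle $C_4$ but adding to $A$ any edge of $\Gamma$ not in $A$ creates a copy of $C_4$. Let $A\subseteq\Gamma$ be a graph on $[n]$ and $r\in\mathbb{N}$. $A$ is an $r$-flower if there exist sets $V^{1},\dots,V^{r+1}$ and, for each $i\in[r]$, sets $R_i,V^i_1,V^i_2,V^i_3$ such that: (1) $V^1=[n]$ and for every $\ell\in[r]$, $V^\ell$ is the disjoint union of $V^{r+1}$ and the sets $V^i_1,V^i_2,V^i_3,R_i$ for $i=\ell,\dots,r$; (2) for every $i\in[r]$, $R_i=\{v^i_1,v^i_2,v^i_3\}$ consists of three pairwise adjacent (in $A$) vertices; (3) for every $i\in[r]$, $j\in\{1,2,3\}$, $N_{A[V^i]}(v^i_j)\setminus R_i=V^i_j$; (4) for every $i\in[r]$, $j\in\{1,2,3\}$ there is a partition $V^i_j=W^i_j\sqcup U^i_j\sqcup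 Y^i_j$ such that (4.1) the edges of $A[W^i_j\sqcup V^{i+1}]$ not in $A[V^{i+1}]$ form a perfect matching between $W^i_j$ and $V^{i+1}$, (4.2) the edges of $A[W^i_j\sqcup U^i_j]$ form a perfect matching between $W^i_j$ and $U^i_j$, (4.3) the edges of $A[Y^i_j]$ form a perfect matching of $Y^i_j$; (5) $A[V^{r+1}]$ is an inclusion-maximal $C_4$-free graph, i.e. $C_4$-saturated in $\Gamma[V^{r+1}]$; (6) $A$ has no edges other than those described in (2)–(5). *)

theory Defs
  imports Complex_Main
begin

definition graph_on :: "nat \<Rightarrow> nat set set \<Rightarrow> bool" where
  "graph_on n G \<longleftrightarrow> (\<forall>e\<in>G. \<exists>u w. u \<noteq> w \<and> e = {u, w} \<and> u \<in> {1..n} \<and> w \<in> {1..n})"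

definition induced :: "nat set set \<Rightarrow> nat set \<Rightarrow> nat set set" where
  "induced A V = {e \<in> A. e \<subseteq> V}"

definition nbhd :: "nat set set \<Rightarrow> nat set \<Rightarrow> nat \<Rightarrow> nat set" where
  "nbhd A V v = {u \<in> V. {u, v} \<in> induced A V}"

definition C4_free :: "nat set set \<Rightarrow> bool" where
  "C4_free A \<longleftrightarrow> \<not> (\<exists>a b c d. distinct [a, b, c, d] \<and>
      {a, b} \<in> A \<and> {b, c} \<in> A \<and> {c, d} \<in> A \<and> {d, a} \<in> A)"

definition C4_saturated :: "nat set set \<Rightarrow> nat set set \<Rightarrow> bool" where
  "C4_saturated G A \<longleftrightarrow> A \<subseteq> G \<and> C4_free A \<and> (\<forall>e \<in> G - A. \<not> C4_free (insert e A))"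

definition perfect_matching_between :: "nat set set \<Rightarrow> nat set \<Rightarrow> nat set \<Rightarrow> bool" where
  "perfect_matching_between M X Z \<longleftrightarrow>
     (\<forall>e\<in>M. \<exists>x\<in>X. \<exists>z\<in>Z. e = {x, z}) \<and> (\<forall>x \<in> X \<union> Z. \<exists>!e. e \<in> M \<and> x \<in> e)"

definition perfect_matching_of :: "nat set set \<Rightarrow> nat set \<Rightarrow> bool" where
  "perfect_matching_of M Y \<longleftrightarrow>
     (\<forall>e\<in>M. \<exists>x\<in>Y. \<exists>z\<in>Y. x \<noteq> z \<and> e = {x, z}) \<and> (\<forall>x \<in> Y. \<exists>!e. e \<in> M \<and> x \<in> e)"

text \<open>Pieces of the decomposition: piece R Vs (i,0) = R_i, piece R Vs (i,j) = V^i_j.\<close>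
definition piece :: "(nat \<Rightarrow> nat set) \<Rightarrow> (nat \<Rightarrow> nat \<Rightarrow> nat set) \<Rightarrow> nat \<times> nat \<Rightarrow> nat set" where
  "piece R Vs p = (if snd p = 0 then R (fst p) else Vs (fst p) (snd p))"

text \<open>The r-flower structure, with witnesses: V i = V^i (i = 1..r+1), R i = R_i,
  v i j = v^i_j, Vs i j = V^i_j, W i j, U i j, Y i j (j = 1,2,3).\<close>
definition is_flower ::
  "nat \<Rightarrow> nat set set \<Rightarrow> nat set set \<Rightarrow> nat \<Rightarrow> (nat \<Rightarrow> nat set) \<Rightarrow> (nat \<Rightarrow> nat set)
   \<Rightarrow> (nat \<Rightarrow> nat \<Rightarrow> nat) \<Rightarrow> (nat \<Rightarrow> nat \<Rightarrow> nat set) \<Rightarrow> (nat \<Rightarrow> nat \<Rightarrow> nat set)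
   \<Rightarrow> (nat \<Rightarrow> nat \<Rightarrow> nat set) \<Rightarrow> (nat \<Rightarrow> nat \<Rightarrow> nat set) \<Rightarrow> bool" where
  "is_flower n G A r V R v Vs W U Y \<longleftrightarrow>
    \<comment> \<open>(1)\<close>
    V 1 = {1..n} \<and>
    (\<forall>l\<in>{1..r}.
       V l = V (r+1) \<union> (\<Union>p \<in> {l..r} \<times> {0..3}. piece R Vs p) \<and>
       (\<forall>p \<in> {l..r} \<times> {0..3}. piece R Vs p \<inter> V (r+1) = {}) \<and>
       (\<forall>p \<in> {l..r} \<times> {0..3}. \<forall>q \<in> {l..r} \<times> {0..3}. p \<noteq> q \<longrightarrow> piece R Vs p \<inter> piece R Vs q = {})) \<and>
    \<comment> \<open>(2)\<close>
    (\<forall>i\<in>{1..r}. R i = {v i 1, v i 2, v i 3} \<and>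
       {v i 1, v i 2} \<in> A \<and> {v i 2, v i 3} \<in> A \<and> {v i 1, v i 3} \<in> A) \<and>
    \<comment> \<open>(3)\<close>
    (\<forall>i\<in>{1..r}. \<forall>j\<in>{1,2,3}. nbhd A (V i) (v i j) - R i = Vs i j) \<and>
    \<comment> \<open>(4)\<close>
    (\<forall>i\<in>{1..r}. \<forall>j\<in>{1,2,3}.
       Vs i j = W i j \<union> U i j \<union> Y i j \<and>
       W i j \<inter> U i j = {} \<and> W i j \<inter> Y i j = {} \<and> U i j \<inter> Y i j = {} \<and>
       perfect_matching_between (induced A (W i j \<union> V (i+1)) - induced A (V (i+1))) (W i j) (V (i+1)) \<and>
       perfect_matching_between (induced A (W i j \<union> U i j)) (W i j) (U i j) \<and>
       perfect_matching_of (induced A (Y i j)) (Y i j)) \<and>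
    \<comment> \<open>(5)\<close>
    C4_saturated (induced G (V (r+1))) (induced A (V (r+1))) \<and>
    \<comment> \<open>(6)\<close>
    (\<forall>e\<in>A. e \<subseteq> V (r+1) \<or>
       (\<exists>i\<in>{1..r}. e \<subseteq> R i \<or>
          (\<exists>j\<in>{1,2,3}. (\<exists>x \<in> Vs i j. e = {v i j, x}) \<or>
             (e \<subseteq> W i j \<union> V (i+1) \<and> \<not> e \<subseteq> V (i+1)) \<or>
             e \<subseteq> W i j \<union> U i j \<or> e \<subseteq> Y i j)))"

end

theory Submission
  imports Defs
begin

text \<open>
  Peel the flower one level at a time. \<open>V i\<close> is the disjoint union of \<open>V (i+1)\<close>, the
  triangle \<open>R i\<close> and the petals \<open>Vs i j\<close>, and the edges of \<open>A[V i]\<close> not inside \<open>V (i+1)\<close>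
  are the triangle, the stars joining \<open>v i j\<close> to \<open>Vs i j\<close> and the three matchings of (4).
  So in \<open>A[V i]\<close> a petal vertex is adjacent only to \<open>v i j\<close>, to one partner in its petal
  and, if it lies in \<open>W i j\<close>, to one vertex of \<open>V (i+1)\<close>, while a vertex of \<open>V (i+1)\<close>
  has at most one neighbour in each \<open>W i j\<close>. Hence no 4-cycle of \<open>A[V i]\<close> meets \<open>R i\<close>
  or a petal, and \<open>C\<^sub>4\<close>-freeness climbs from \<open>A[V (r+1)]\<close> to \<open>A = A[V 1]\<close>.
  A non-edge inside \<open>V (r+1)\<close> is saturated by (5). Any other non-edge has an endpoint in
  \<open>V i - V (i+1)\<close>, where \<open>i\<close> is the last level containing both endpoints, and there a
  path of length three through the triangle, a star or a matching closes a 4-cycle.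
  Finally, petal \<open>j\<close> of level \<open>i\<close> carries
  \<open>|Vs i j| + |V (i+1)| + |W i j| + |Y i j|/2 = 3/2 |Vs i j| + |V (i+1)|\<close> edges, whence
  \<open>2 |A[V i]| + 3 = 2 |A[V (i+1)]| + 3 |V i| + 3 |V (i+1)|\<close>, which telescopes to the formula.
\<close>

section \<open>Four-cycles\<close>

definition four_cycle :: "nat set set \<Rightarrow> nat \<Rightarrow> nat \<Rightarrow> nat \<Rightarrow> nat \<Rightarrow> bool" where
  "four_cycle E a b c d \<longleftrightarrow>
     distinct [a, b, c, d] \<and> {a, b} \<in> E \<and> {b, c} \<in> E \<and> {c, d} \<in> E \<and> {d, a} \<in> E"

lemma C4_free_iff_no_four_cycle: "C4_free E \<longleftrightarrow> (\<forall>a b c d. \<not> four_cycle E a b c d)"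
  unfolding C4_free_def four_cycle_def by blast

lemma four_cycle_rotate: "four_cycle E a b c d \<Longrightarrow> four_cycle E b c d a"
  unfolding four_cycle_def by auto

lemma four_cycle_reverse: "four_cycle E a b c d \<Longrightarrow> four_cycle E a d c b"
  unfolding four_cycle_def by (auto simp: insert_commute)

lemma edge_induced_iff: "{x, y} \<in> induced E S \<longleftrightarrow> {x, y} \<in> E \<and> x \<in> S \<and> y \<in> S"
  unfolding induced_def by auto

lemma four_cycle_induced:
  "four_cycle (induced E S) a b c d \<longleftrightarrow> four_cycle E a b c d \<and> a \<in> S \<and> b \<in> S \<and> c \<in> S \<and> d \<in> S"
  unfolding four_cycle_def edge_induced_iff by blast

lemma C4_free_subset: "C4_free E \<Longrightarrow> F \<subseteq> E \<Longrightarrow> C4_free F"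
  unfolding C4_free_def by blast

lemma not_C4_free_insert_path:
  assumes "{a, x} \<in> E" "{x, y} \<in> E" "{y, b} \<in> E" "distinct [a, x, y, b]"
  shows "\<not> C4_free (insert {a, b} E)"
proof -
  have "four_cycle (insert {a, b} E) a x y b"
    using assms unfolding four_cycle_def by (auto simp: insert_commute)
  then show ?thesis
    unfolding C4_free_iff_no_four_cycle by blast
qed

section \<open>Perfect matchings\<close>

lemma perfect_matching_between_edge:
  "perfect_matching_between M X Z \<Longrightarrow> e \<in> M \<Longrightarrow> \<exists>x\<in>X. \<exists>z\<in>Z. e = {x, z}"
  unfolding perfect_matching_between_def by simp

lemma perfect_matching_between_unique:
  assumes "perfect_matching_between M X Z" "e \<in> M" "e' \<in> M" "x \<in> X \<union> Z" "x \<in> e" "x \<in> e'"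
  shows "e = e'"
proof -
  have "\<exists>!e. e \<in> M \<and> x \<in> e"
    using assms(1,4) unfolding perfect_matching_between_def by simp
  with assms(2,3,5,6) show ?thesis by blast
qed

lemma perfect_matching_between_partner:
  assumes disj: "X \<inter> Z = {}" and M: "perfect_matching_between M X Z"
  shows "x \<in> X \<Longrightarrow> \<exists>z\<in>Z. {x, z} \<in> M"
    and "z \<in> Z \<Longrightarrow> \<exists>x\<in>X. {x, z} \<in> M"
proof -
  have "\<exists>e\<in>M. y \<in> e" if "y \<in> X \<union> Z" for y
  proof -
    have "\<exists>!e. e \<in> M \<and> y \<in> e"
      using M that unfolding perfect_matching_between_def by simp
    then show ?thesis by blast
  qed
  then have "\<exists>x\<in>X. \<exists>z\<in>Z. {x, z} \<in> M \<and> y \<in> {x, z}" if "y \<in> X \<union> Z" for y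
    using that perfect_matching_between_edge [OF M] by blast
  with disj show "x \<in> X \<Longrightarrow> \<exists>z\<in>Z. {x, z} \<in> M" "z \<in> Z \<Longrightarrow> \<exists>x\<in>X. {x, z} \<in> M"
    by blast+
qed

lemma perfect_matching_between_imp_of:
  assumes disj: "X \<inter> Z = {}" and M: "perfect_matching_between M X Z"
  shows "perfect_matching_of M (X \<union> Z)"
  unfolding perfect_matching_of_def
proof (intro conjI ballI)
  fix e assume "e \<in> M"
  then obtain x z where "x \<in> X" "z \<in> Z" "e = {x, z}"
    using perfect_matching_between_edge [OF M] by blast
  moreover from this have "x \<noteq> z"
    using disj by blast
  ultimately show "\<exists>x\<in>X \<union> Z. \<exists>z\<in>X \<union> Z. x \<noteq> z \<and> e = {x, z}"
    by blast
next
  fix x assume "x \<in> X \<union> Z"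
  then show "\<exists>!e. e \<in> M \<and> x \<in> e"
    using M unfolding perfect_matching_between_def by simp
qed

lemma perfect_matching_between_card_right:
  assumes disj: "X \<inter> Z = {}" and M: "perfect_matching_between M X Z"
  shows "card Z = card M"
proof -
  note edge = perfect_matching_between_edge [OF M]
  have unique: "\<exists>!e. e \<in> M \<and> z \<in> e" if "z \<in> Z" for z
    using M that unfolding perfect_matching_between_def by simp
  define edge_at where "edge_at z = (THE e. e \<in> M \<and> z \<in> e)" for z
  have edge_at: "edge_at z \<in> M" "z \<in> edge_at z" if "z \<in> Z" for z
    using theI' [OF unique [OF that]] unfolding edge_at_def by blast+
  have edge_at_eq: "edge_at z = e" if "z \<in> Z" "e \<in> M" "z \<in> e" for z e
    unfolding edge_at_def using that by (intro the1_equality unique) auto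
  have "bij_betw edge_at Z M"
  proof (rule bij_betw_imageI)
    show "inj_on edge_at Z"
    proof (rule inj_onI)
      fix z z' assume z: "z \<in> Z" "z' \<in> Z" "edge_at z = edge_at z'"
      obtain x y where "x \<in> X" "y \<in> Z" "edge_at z = {x, y}"
        using edge edge_at(1) [OF z(1)] by blast
      moreover have "z \<in> edge_at z" "z' \<in> edge_at z"
        using edge_at(2) z by auto
      ultimately have "z \<in> {x, y}" "z' \<in> {x, y}"
        by simp_all
      with \<open>x \<in> X\<close> z(1,2) disj show "z = z'"
        by blast
    qed
    show "edge_at ` Z = M"
    proof (intro equalityI subsetI)
      fix e assume "e \<in> M"
      then obtain x z where "z \<in> Z" "e = {x, z}"
        using edge by blast
      then show "e \<in> edge_at ` Z"
        using edge_at_eq \<open>e \<in> M\<close> by blast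
    qed (use edge_at in blast)
  qed
  then show ?thesis
    by (rule bij_betw_same_card)
qed

lemma perfect_matching_of_edge:
  "perfect_matching_of M Y \<Longrightarrow> e \<in> M \<Longrightarrow> \<exists>x\<in>Y. \<exists>z\<in>Y. x \<noteq> z \<and> e = {x, z}"
  unfolding perfect_matching_of_def by simp

lemma perfect_matching_of_unique:
  assumes "perfect_matching_of M Y" "e \<in> M" "e' \<in> M" "x \<in> Y" "x \<in> e" "x \<in> e'"
  shows "e = e'"
proof -
  have "\<exists>!e. e \<in> M \<and> x \<in> e"
    using assms(1,4) unfolding perfect_matching_of_def by simp
  with assms(2,3,5,6) show ?thesis by blast
qed

lemma perfect_matching_of_partner:
  assumes M: "perfect_matching_of M Y" and "x \<in> Y"
  shows "\<exists>y\<in>Y. y \<noteq> x \<and> {x, y} \<in> M"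
proof -
  have "\<exists>!e. e \<in> M \<and> x \<in> e"
    using M \<open>x \<in> Y\<close> unfolding perfect_matching_of_def by simp
  then obtain e where "e \<in> M" "x \<in> e"
    by blast
  moreover from this obtain a b where "a \<in> Y" "b \<in> Y" "a \<noteq> b" "e = {a, b}"
    using perfect_matching_of_edge [OF M] by blast
  moreover have "{b, a} = {a, b}"
    by (rule insert_commute)
  ultimately show ?thesis
    by (metis insertE singletonD)
qed

lemma perfect_matching_of_card:
  assumes "finite Y" and M: "perfect_matching_of M Y"
  shows "card Y = 2 * card M"
proof -
  note edge = perfect_matching_of_edge [OF M]
  have Y_eq: "Y = \<Union>M"
  proof
    show "Y \<subseteq> \<Union>M"
      using perfect_matching_of_partner [OF M] by blast
    show "\<Union>M \<subseteq> Y"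
      using edge by blast
  qed
  have "finite M"
    using \<open>finite Y\<close> unfolding Y_eq by (rule finite_UnionD)
  have "pairwise disjnt M"
    unfolding pairwise_def disjnt_def using perfect_matching_of_unique [OF M] Y_eq by blast
  moreover have "\<And>e. e \<in> M \<Longrightarrow> finite e"
    using edge by blast
  ultimately have "card Y = (\<Sum>e\<in>M. card e)"
    unfolding Y_eq by (rule card_Union_disjoint)
  also have "\<dots> = (\<Sum>e\<in>M. 2)"
  proof (rule sum.cong)
    fix e assume "e \<in> M"
    then obtain x z where "x \<noteq> z" "e = {x, z}"
      using edge by blast
    then show "card e = 2" by simp
  qed simp
  finally show ?thesis by simp
qed

section \<open>Descending chains of levels\<close>

lemma exists_level_exit:
  fixes V :: "nat \<Rightarrow> 'a set"
  assumes "e \<subseteq> V 1" "\<not> e \<subseteq> V (r + 1)"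
  obtains i where "i \<in> {1..r}" "e \<subseteq> V i" "\<not> e \<subseteq> V (i + 1)"
proof -
  have "\<exists>i\<in>{1..k}. e \<subseteq> V i \<and> \<not> e \<subseteq> V (i + 1)" if "\<not> e \<subseteq> V (k + 1)" for k
    using that
  proof (induction k)
    case 0
    with assms(1) show ?case by simp
  next
    case (Suc k)
    then show ?case
      by (cases "e \<subseteq> V (k + 1)") force+
  qed
  with assms(2) that show ?thesis by blast
qed

lemma flower_count_telescope:
  fixes a c :: "nat \<Rightarrow> real"
  assumes "\<And>i. i \<in> {1..r} \<Longrightarrow> 2 * a i + 3 = 2 * a (i + 1) + 3 * c i + 3 * c (i + 1)"
  shows "a 1 = a (r + 1) + 3/2 * (c 1 - c (r + 1) - r) + 3 * (\<Sum>i=2..r+1. c i)"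
  using assms
proof (induction r)
  case 0
  then show ?case by simp
next
  case (Suc r)
  define S where "S = (\<Sum>i=2..r+1. c i)"
  have IH: "a 1 = a (r + 1) + 3/2 * (c 1 - c (r + 1) - r) + 3 * S"
    using Suc unfolding S_def by simp
  have step: "2 * a (r + 1) + 3 = 2 * a (r + 2) + 3 * c (r + 1) + 3 * c (r + 2)"
    using Suc.prems [of "r + 1"] by simp
  have sum: "(\<Sum>i=2..r+2. c i) = S + c (r + 2)"
    unfolding S_def by simp
  have "Suc r + 1 = r + 2" "real (Suc r) = real r + 1"
    by simp_all
  then show ?case
    using IH step sum by (simp only:) argo
qed

section \<open>The level structure of a flower\<close>

locale flower =
  fixes n :: nat and G A :: "nat set set" and r :: nat
    and V R :: "nat \<Rightarrow> nat set" and v :: "nat \<Rightarrow> nat \<Rightarrow> nat"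
    and Vs W U Y :: "nat \<Rightarrow> nat \<Rightarrow> nat set"
  assumes graph: "graph_on n G"
    and A_subset_G: "A \<subseteq> G"
    and V_1: "V 1 = {1..n}"
    and levels: "\<forall>l\<in>{1..r}.
       V l = V (r+1) \<union> (\<Union>p \<in> {l..r} \<times> {0..3}. piece R Vs p) \<and>
       (\<forall>p \<in> {l..r} \<times> {0..3}. piece R Vs p \<inter> V (r+1) = {}) \<and>
       (\<forall>p \<in> {l..r} \<times> {0..3}. \<forall>q \<in> {l..r} \<times> {0..3}. p \<noteq> q \<longrightarrow> piece R Vs p \<inter> piece R Vs q = {})"
    and centres: "\<forall>i\<in>{1..r}. R i = {v i 1, v i 2, v i 3} \<and>
       {v i 1, v i 2} \<in> A \<and> {v i 2, v i 3} \<in> A \<and> {v i 1, v i 3} \<in> A"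
    and centre_nbhds: "\<forall>i\<in>{1..r}. \<forall>j\<in>{1,2,3}. nbhd A (V i) (v i j) - R i = Vs i j"
    and petals: "\<forall>i\<in>{1..r}. \<forall>j\<in>{1,2,3}.
       Vs i j = W i j \<union> U i j \<union> Y i j \<and>
       W i j \<inter> U i j = {} \<and> W i j \<inter> Y i j = {} \<and> U i j \<inter> Y i j = {} \<and>
       perfect_matching_between (induced A (W i j \<union> V (i+1)) - induced A (V (i+1))) (W i j) (V (i+1)) \<and>
       perfect_matching_between (induced A (W i j \<union> U i j)) (W i j) (U i j) \<and>
       perfect_matching_of (induced A (Y i j)) (Y i j)"
    and core_saturated: "C4_saturated (induced G (V (r+1))) (induced A (V (r+1)))"
    and edge_cases: "\<forall>e\<in>A. e \<subseteq> V (r+1) \<or>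
       (\<exists>i\<in>{1..r}. e \<subseteq> R i \<or>
          (\<exists>j\<in>{1,2,3}. (\<exists>x \<in> Vs i j. e = {v i j, x}) \<or>
             (e \<subseteq> W i j \<union> V (i+1) \<and> \<not> e \<subseteq> V (i+1)) \<or>
             e \<subseteq> W i j \<union> U i j \<or> e \<subseteq> Y i j))"

lemma flower_iff: "flower n G A r V R v Vs W U Y \<longleftrightarrow> graph_on n G \<and> A \<subseteq> G \<and> is_flower n G A r V R v Vs W U Y"
  unfolding flower_def is_flower_def by (simp only: conj_assoc)

context flower
begin

lemma V_eq_Union:
  assumes "l \<in> {1..r+1}"
  shows "V l = V (r+1) \<union> (\<Union>p \<in> {l..r} \<times> {0..3}. piece R Vs p)"
proof (cases "l = r + 1")
  case False
  with assms have "l \<in> {1..r}" by auto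
  from bspec [OF levels this] show ?thesis by blast
qed simp

lemma piece_disjoint_core:
  assumes "p \<in> {1..r} \<times> {0..3}"
  shows "piece R Vs p \<inter> V (r+1) = {}"
proof -
  from assms have "1 \<in> {1..r}" by auto
  from bspec [OF levels this] assms show ?thesis by blast
qed

lemma pieces_disjoint:
  assumes "p \<in> {1..r} \<times> {0..3}" "q \<in> {1..r} \<times> {0..3}" "p \<noteq> q"
  shows "piece R Vs p \<inter> piece R Vs q = {}"
proof -
  from assms have "1 \<in> {1..r}" by auto
  from bspec [OF levels this] assms show ?thesis by blast
qed

lemma centre_eq: "i \<in> {1..r} \<Longrightarrow> R i = {v i 1, v i 2, v i 3}"
  using centres by blast

lemma triangle_edges:
  "i \<in> {1..r} \<Longrightarrow> {v i 1, v i 2} \<in> A \<and> {v i 2, v i 3} \<in> A \<and> {v i 1, v i 3} \<in> A"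
  using centres by blast

lemma centre_nbhd: "i \<in> {1..r} \<Longrightarrow> j \<in> {1,2,3} \<Longrightarrow> nbhd A (V i) (v i j) - R i = Vs i j"
  using centre_nbhds by blast

abbreviation "cross_edges i j \<equiv> induced A (W i j \<union> V (i+1)) - induced A (V (i+1))"
abbreviation "WU_edges i j \<equiv> induced A (W i j \<union> U i j)"
abbreviation "Y_edges i j \<equiv> induced A (Y i j)"

lemma petal_partition:
  assumes "i \<in> {1..r}" "j \<in> {1,2,3}"
  shows "Vs i j = W i j \<union> U i j \<union> Y i j"
    and "W i j \<inter> U i j = {}" "W i j \<inter> Y i j = {}" "U i j \<inter> Y i j = {}"
  using bspec [OF bspec [OF petals assms(1)] assms(2)] by blast+

lemma cross_matching:
  "i \<in> {1..r} \<Longrightarrow> j \<in> {1,2,3} \<Longrightarrow> perfect_matching_between (cross_edges i j) (W i j) (V (i+1))"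
  using petals by blast

lemma WU_matching:
  "i \<in> {1..r} \<Longrightarrow> j \<in> {1,2,3} \<Longrightarrow> perfect_matching_between (WU_edges i j) (W i j) (U i j)"
  using petals by blast

lemma Y_matching: "i \<in> {1..r} \<Longrightarrow> j \<in> {1,2,3} \<Longrightarrow> perfect_matching_of (Y_edges i j) (Y i j)"
  using petals by blast

lemma edge_of_A: "e \<in> A \<Longrightarrow> \<exists>x y. x \<noteq> y \<and> e = {x, y} \<and> x \<in> {1..n} \<and> y \<in> {1..n}"
  using graph A_subset_G unfolding graph_on_def by blast

lemma edge_distinct: "{x, y} \<in> A \<Longrightarrow> x \<noteq> y"
  using edge_of_A by (metis doubleton_eq_iff insert_absorb2)

lemma edge_nonempty: "e \<in> A \<Longrightarrow> e \<noteq> {}"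
  using edge_of_A by blast

lemma finite_A: "finite A"
proof (rule finite_subset)
  show "A \<subseteq> Pow {1..n}"
    using edge_of_A by blast
qed simp

lemma induced_V_1: "induced A (V 1) = A"
proof -
  have "e \<subseteq> {1..n}" if "e \<in> A" for e
    using edge_of_A [OF that] by blast
  then show ?thesis
    unfolding induced_def V_1 by blast
qed

lemma V_split:
  assumes i: "i \<in> {1..r}"
  shows "V i = V (i+1) \<union> R i \<union> Vs i 1 \<union> Vs i 2 \<union> Vs i 3"
proof -
  have "{i..r} \<times> {0..3} = {i} \<times> {0,1,2,3} \<union> {i+1..r} \<times> {0..3::nat}"
    using i by auto
  then have "(\<Union>p \<in> {i..r} \<times> {0..3}. piece R Vs p)
      = R i \<union> Vs i 1 \<union> Vs i 2 \<union> Vs i 3 \<union> (\<Union>p \<in> {i+1..r} \<times> {0..3}. piece R Vs p)"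
    by (simp add: piece_def Un_ac)
  moreover have "V i = V (r+1) \<union> (\<Union>p \<in> {i..r} \<times> {0..3}. piece R Vs p)"
    "V (i+1) = V (r+1) \<union> (\<Union>p \<in> {i+1..r} \<times> {0..3}. piece R Vs p)"
    using i by (intro V_eq_Union; simp)+
  ultimately show ?thesis
    by auto
qed

lemma V_antimono:
  assumes "1 \<le> l" "l \<le> k" "k \<le> r + 1"
  shows "V k \<subseteq> V l"
proof -
  have "(\<Union>p \<in> {k..r} \<times> {0..3}. piece R Vs p) \<subseteq> (\<Union>p \<in> {l..r} \<times> {0..3}. piece R Vs p)"
    using assms(2) by (intro UN_mono) auto
  moreover have "V l = V (r+1) \<union> (\<Union>p \<in> {l..r} \<times> {0..3}. piece R Vs p)"
    "V k = V (r+1) \<union> (\<Union>p \<in> {k..r} \<times> {0..3}. piece R Vs p)"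
    using assms by (intro V_eq_Union; simp)+
  ultimately show ?thesis
    by auto
qed

lemma finite_V: "k \<in> {1..r+1} \<Longrightarrow> finite (V k)"
  using V_antimono [of 1 k] V_1 by (auto intro: finite_subset)

lemma piece_disjoint_succ:
  assumes i: "i \<in> {1..r}" and k: "k \<le> 3"
  shows "piece R Vs (i, k) \<inter> V (i+1) = {}"
proof -
  have "piece R Vs (i, k) \<inter> piece R Vs p = {}" if "p \<in> {i+1..r} \<times> {0..3}" for p
    using pieces_disjoint [of "(i, k)" p] i k that by auto
  moreover have "piece R Vs (i, k) \<inter> V (r+1) = {}"
    using piece_disjoint_core i k by auto
  moreover have "V (i+1) = V (r+1) \<union> (\<Union>p \<in> {i+1..r} \<times> {0..3}. piece R Vs p)"
    using i by (intro V_eq_Union) auto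
  ultimately show ?thesis
    by (simp add: Int_Un_distrib Int_UN_distrib)
qed

context
  fixes i assumes i: "i \<in> {1..r}"
begin

lemma centre_disjoint_succ: "R i \<inter> V (i+1) = {}"
  using piece_disjoint_succ [OF i, of 0] by (simp add: piece_def)

lemma petal_disjoint_succ: "j \<in> {1,2,3} \<Longrightarrow> Vs i j \<inter> V (i+1) = {}"
  using piece_disjoint_succ [OF i, of j] by (auto simp: piece_def)

lemma centre_petal_disjoint: "j \<in> {1,2,3} \<Longrightarrow> R i \<inter> Vs i j = {}"
  using pieces_disjoint [of "(i, 0)" "(i, j)"] i by (auto simp: piece_def)

lemma petals_disjoint: "j \<in> {1,2,3} \<Longrightarrow> k \<in> {1,2,3} \<Longrightarrow> j \<noteq> k \<Longrightarrow> Vs i j \<inter> Vs i k = {}"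
  using pieces_disjoint [of "(i, j)" "(i, k)"] i by (auto simp: piece_def)

lemma centre_subset: "R i \<subseteq> V i"
  and V_succ_subset: "V (i+1) \<subseteq> V i"
  and petal_subset: "j \<in> {1,2,3} \<Longrightarrow> Vs i j \<subseteq> V i"
  using V_split [OF i] by auto

lemma finite_petal: "j \<in> {1,2,3} \<Longrightarrow> finite (Vs i j)"
  using finite_V [of i] i by (auto intro: finite_subset [OF petal_subset])

lemma petal_parts_subset:
  assumes "j \<in> {1,2,3}"
  shows "W i j \<subseteq> Vs i j" "U i j \<subseteq> Vs i j" "Y i j \<subseteq> Vs i j"
  using petal_partition [OF i assms] by auto

lemma v_in_centre: "j \<in> {1,2,3} \<Longrightarrow> v i j \<in> R i"
  using centre_eq [OF i] by auto

lemma centre_cases: "x \<in> R i \<Longrightarrow> \<exists>j\<in>{1,2,3}. x = v i j"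
  using centre_eq [OF i] by auto

lemma centre_edge: "j \<in> {1,2,3} \<Longrightarrow> k \<in> {1,2,3} \<Longrightarrow> j \<noteq> k \<Longrightarrow> {v i j, v i k} \<in> A"
  using triangle_edges [OF i] by (auto simp: insert_commute)

lemma centre_distinct: "v i 1 \<noteq> v i 2" "v i 2 \<noteq> v i 3" "v i 1 \<noteq> v i 3"
  using triangle_edges [OF i] edge_distinct by blast+

lemma v_inj: "j \<in> {1,2,3} \<Longrightarrow> k \<in> {1,2,3} \<Longrightarrow> v i j = v i k \<Longrightarrow> j = k"
  using centre_distinct by auto

lemma card_centre: "card (R i) = 3"
  using centre_eq [OF i] centre_distinct by simp

lemma star_edge:
  assumes "j \<in> {1,2,3}" "x \<in> Vs i j"
  shows "{v i j, x} \<in> A"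
proof -
  have "x \<in> nbhd A (V i) (v i j)"
    using centre_nbhd [OF i assms(1)] assms(2) by blast
  then show ?thesis
    unfolding nbhd_def induced_def by (auto simp: insert_commute)
qed

lemma centre_nbr_in_petal:
  assumes j: "j \<in> {1,2,3}" and "{v i j, z} \<in> A" "z \<in> V i" "z \<notin> R i"
  shows "z \<in> Vs i j"
proof -
  have "v i j \<in> V i"
    using v_in_centre [OF j] centre_subset by blast
  then have "z \<in> nbhd A (V i) (v i j)"
    using assms unfolding nbhd_def induced_def by (auto simp: insert_commute)
  with centre_nbhd [OF i j] \<open>z \<notin> R i\<close> show ?thesis by blast
qed

end

text \<open>The edges that condition (6) attributes to level \<open>i\<close>:\<close>

abbreviation "flower_edge i e \<equiv> e \<subseteq> R i \<or>
  (\<exists>j\<in>{1,2,3}. (\<exists>x \<in> Vs i j. e = {v i j, x}) \<or>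
     (e \<subseteq> W i j \<union> V (i+1) \<and> \<not> e \<subseteq> V (i+1)) \<or>
     e \<subseteq> W i j \<union> U i j \<or> e \<subseteq> Y i j)"

abbreviation "layer i \<equiv> induced A (V i) - induced A (V (i+1))"
abbreviation "triangle i \<equiv> {e \<in> A. e \<subseteq> R i}"
abbreviation "star i j \<equiv> (\<lambda>x. {v i j, x}) ` Vs i j"
abbreviation "petal_edges i j \<equiv> star i j \<union> cross_edges i j \<union> WU_edges i j \<union> Y_edges i j"

lemma flower_edge_in_layer:
  assumes i: "i \<in> {1..r}" and e: "e \<in> A" "flower_edge i e"
  shows "e \<in> layer i"
proof -
  have "e \<noteq> {}"
    using edge_nonempty [OF e(1)] .
  from e(2) have "e \<subseteq> V i \<and> \<not> e \<subseteq> V (i+1)"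
  proof (elim disjE bexE conjE)
    assume "e \<subseteq> R i"
    with \<open>e \<noteq> {}\<close> centre_subset [OF i] centre_disjoint_succ [OF i] show ?thesis
      by blast
  next
    fix j x assume j: "j \<in> {1,2,3}" and "x \<in> Vs i j" "e = {v i j, x}"
    with v_in_centre [OF i j] centre_subset [OF i] centre_disjoint_succ [OF i] petal_subset [OF i j]
    show ?thesis by blast
  next
    fix j assume j: "j \<in> {1,2,3}" and "e \<subseteq> W i j \<union> V (i+1)" "\<not> e \<subseteq> V (i+1)"
    with petal_parts_subset [OF i j] petal_subset [OF i j] V_succ_subset [OF i] show ?thesis
      by blast
  next
    fix j assume j: "j \<in> {1,2,3}" and "e \<subseteq> W i j \<union> U i j"
    with \<open>e \<noteq> {}\<close> petal_parts_subset [OF i j] petal_subset [OF i j] petal_disjoint_succ [OF i j]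
    show ?thesis by blast
  next
    fix j assume j: "j \<in> {1,2,3}" and "e \<subseteq> Y i j"
    with \<open>e \<noteq> {}\<close> petal_parts_subset [OF i j] petal_subset [OF i j] petal_disjoint_succ [OF i j]
    show ?thesis by blast
  qed
  with e(1) show ?thesis
    unfolding induced_def by blast
qed

lemma layers_disjoint:
  assumes "i \<in> {1..r}" "i' \<in> {1..r}" "i \<noteq> i'"
  shows "layer i \<inter> layer i' = {}"
proof -
  have lower_upper: "layer k \<inter> layer k' = {}" if "k \<in> {1..r}" "k' \<in> {1..r}" "k < k'" for k k'
  proof -
    have "V k' \<subseteq> V (k+1)"
      using that by (intro V_antimono) auto
    then show ?thesis
      unfolding induced_def by blast
  qed
  consider "i < i'" | "i' < i"
    using assms(3) by linarith
  then show ?thesis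
  proof cases
    case 1
    from lower_upper [OF assms(1,2) this] show ?thesis .
  next
    case 2
    from lower_upper [OF assms(2,1) this] show ?thesis
      by (simp only: Int_commute)
  qed
qed

lemma layer_iff:
  assumes i: "i \<in> {1..r}"
  shows "e \<in> layer i \<longleftrightarrow> e \<in> A \<and> flower_edge i e"
proof
  assume e: "e \<in> layer i"
  then have "e \<in> A" "\<not> e \<subseteq> V (r+1)"
    using V_antimono [of "i+1" "r+1"] i unfolding induced_def by auto
  from bspec [OF edge_cases this(1)] have "\<exists>i'\<in>{1..r}. flower_edge i' e"
  proof
    assume "e \<subseteq> V (r+1)"
    with \<open>\<not> e \<subseteq> V (r+1)\<close> show ?thesis ..
  qed
  then obtain i' where i': "i' \<in> {1..r}" "flower_edge i' e" ..
  have "i' = i"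
  proof (rule ccontr)
    assume "i' \<noteq> i"
    then have "layer i \<inter> layer i' = {}"
      using layers_disjoint i i'(1) by blast
    moreover have "e \<in> layer i'"
      using flower_edge_in_layer [OF i'(1) \<open>e \<in> A\<close> i'(2)] .
    ultimately show False
      using e by blast
  qed
  with i'(2) \<open>e \<in> A\<close> show "e \<in> A \<and> flower_edge i e"
    by (simp only:)
next
  assume e: "e \<in> A \<and> flower_edge i e"
  show "e \<in> layer i"
    using flower_edge_in_layer [OF i conjunct1 [OF e] conjunct2 [OF e]] .
qed

lemma layer_eq:
  assumes i: "i \<in> {1..r}"
  shows "layer i = triangle i \<union> (\<Union>j\<in>{1,2,3}. petal_edges i j)"
proof (intro equalityI subsetI)
  fix e assume "e \<in> layer i"
  then have "e \<in> A" "flower_edge i e"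
    using layer_iff [OF i] by blast+
  from this(2) show "e \<in> triangle i \<union> (\<Union>j\<in>{1,2,3}. petal_edges i j)"
  proof (elim disjE bexE conjE)
    assume "e \<subseteq> R i"
    with \<open>e \<in> A\<close> show ?thesis by blast
  next
    fix j x assume "j \<in> {1,2,3}" "x \<in> Vs i j" "e = {v i j, x}"
    then show ?thesis by blast
  next
    fix j assume "j \<in> {1,2,3}" "e \<subseteq> W i j \<union> V (i+1)" "\<not> e \<subseteq> V (i+1)"
    with \<open>e \<in> A\<close> show ?thesis
      unfolding induced_def by blast
  next
    fix j assume "j \<in> {1,2,3}" "e \<subseteq> W i j \<union> U i j"
    with \<open>e \<in> A\<close> show ?thesis
      unfolding induced_def by blast
  next
    fix j assume "j \<in> {1,2,3}" "e \<subseteq> Y i j"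
    with \<open>e \<in> A\<close> show ?thesis
      unfolding induced_def by blast
  qed
next
  fix e assume "e \<in> triangle i \<union> (\<Union>j\<in>{1,2,3}. petal_edges i j)"
  then have "e \<in> A \<and> flower_edge i e"
  proof (elim UnE UN_E)
    fix j assume j: "j \<in> {1,2,3}" and "e \<in> star i j"
    then obtain x where "x \<in> Vs i j" "e = {v i j, x}"
      by blast
    with star_edge [OF i j] j show ?thesis
      by blast
  qed (auto simp: induced_def)
  then show "e \<in> layer i"
    using layer_iff [OF i] by blast
qed

section \<open>Inside one level\<close>

context
  fixes i assumes i: "i \<in> {1..r}"
begin

lemma cross_edge_shape: "j \<in> {1,2,3} \<Longrightarrow> e \<in> cross_edges i j \<Longrightarrow> \<exists>w\<in>W i j. \<exists>y\<in>V (i+1). e = {w, y}"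
  using perfect_matching_between_edge [OF cross_matching [OF i]] .

lemma WU_edge_shape: "j \<in> {1,2,3} \<Longrightarrow> e \<in> WU_edges i j \<Longrightarrow> \<exists>w\<in>W i j. \<exists>u\<in>U i j. e = {w, u}"
  using perfect_matching_between_edge [OF WU_matching [OF i]] .

lemma WU_Y_edges_in_petal:
  assumes j: "j \<in> {1,2,3}" and e: "e \<in> WU_edges i j \<union> Y_edges i j"
  shows "e \<subseteq> Vs i j"
  using e petal_parts_subset [OF i j] unfolding induced_def by blast

lemma petal_nbr_cases:
  assumes j: "j \<in> {1,2,3}" and x: "x \<in> Vs i j" and z: "z \<in> V i" and xz: "{x, z} \<in> A"
  shows "z = v i j \<or> z \<in> Vs i j \<or> (x \<in> W i j \<and> z \<in> V (i+1))"
proof -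
  have x_not: "x \<notin> R i" "x \<notin> V (i+1)"
    using x centre_petal_disjoint [OF i j] petal_disjoint_succ [OF i j] by blast+
  have same_petal: "k = j" if "k \<in> {1,2,3}" "x \<in> Vs i k" for k
    using petals_disjoint [OF i j that(1)] x that(2) by blast
  have "x \<in> V i"
    using x petal_subset [OF i j] by blast
  with z xz x_not have "{x, z} \<in> layer i"
    by (simp add: edge_induced_iff)
  then have "{x, z} \<in> triangle i \<union> (\<Union>k\<in>{1,2,3}. petal_edges i k)"
    unfolding layer_eq [OF i] .
  moreover have "{x, z} \<notin> triangle i"
    using x_not by blast
  ultimately obtain k where k: "k \<in> {1,2,3}" "{x, z} \<in> petal_edges i k"
    by blast
  from k(2) show ?thesis
  proof (elim UnE)
    assume "{x, z} \<in> star i k"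
    then obtain y where "y \<in> Vs i k" "{x, z} = {v i k, y}"
      by blast
    with x_not(1) v_in_centre [OF i k(1)] have "x = y" "z = v i k"
      by (auto simp: doubleton_eq_iff)
    with same_petal k(1) \<open>y \<in> Vs i k\<close> show ?thesis
      by blast
  next
    assume "{x, z} \<in> cross_edges i k"
    then obtain w y where "w \<in> W i k" "y \<in> V (i+1)" "{x, z} = {w, y}"
      using cross_edge_shape [OF k(1)] by blast
    with x_not(2) have "x = w" "z = y"
      by (auto simp: doubleton_eq_iff)
    with same_petal k(1) \<open>w \<in> W i k\<close> \<open>y \<in> V (i+1)\<close> petal_parts_subset [OF i k(1)]
    show ?thesis by blast
  next
    assume "{x, z} \<in> WU_edges i k"
    with same_petal k(1) WU_Y_edges_in_petal [OF k(1)] show ?thesis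
      by blast
  next
    assume "{x, z} \<in> Y_edges i k"
    with same_petal k(1) WU_Y_edges_in_petal [OF k(1)] show ?thesis
      by blast
  qed
qed

lemma edge_in_petal_cases:
  assumes j: "j \<in> {1,2,3}" and e: "e \<in> A" "e \<subseteq> Vs i j"
  shows "e \<in> WU_edges i j \<union> Y_edges i j"
proof -
  have "e \<noteq> {}"
    using edge_nonempty [OF e(1)] .
  have "e \<in> layer i"
    using e \<open>e \<noteq> {}\<close> petal_subset [OF i j] petal_disjoint_succ [OF i j]
    unfolding induced_def by blast
  then have "e \<in> triangle i \<union> (\<Union>k\<in>{1,2,3}. petal_edges i k)"
    unfolding layer_eq [OF i] .
  moreover have "e \<notin> triangle i"
    using e(2) \<open>e \<noteq> {}\<close> centre_petal_disjoint [OF i j] by blast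
  ultimately obtain k where k: "k \<in> {1,2,3}" "e \<in> petal_edges i k"
    by blast
  have "e \<notin> star i k"
    using e(2) v_in_centre [OF i k(1)] centre_petal_disjoint [OF i j] by blast
  moreover have "e \<notin> cross_edges i k"
    using e(2) petal_disjoint_succ [OF i j] cross_edge_shape [OF k(1)] by blast
  ultimately have "e \<in> WU_edges i k \<union> Y_edges i k"
    using k(2) by blast
  moreover from this have "k = j"
    using WU_Y_edges_in_petal [OF k(1)] e(2) \<open>e \<noteq> {}\<close> petals_disjoint [OF i j k(1)] by blast
  ultimately show ?thesis
    by simp
qed

lemma petal_partner_unique:
  assumes j: "j \<in> {1,2,3}" and "x \<in> Vs i j" "z \<in> Vs i j" "z' \<in> Vs i j"
    and "{x, z} \<in> A" "{x, z'} \<in> A"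
  shows "z = z'"
proof -
  have "{x, z} \<subseteq> Vs i j" "{x, z'} \<subseteq> Vs i j"
    using assms(2-4) by simp_all
  then have e: "{x, z} \<in> WU_edges i j \<union> Y_edges i j" "{x, z'} \<in> WU_edges i j \<union> Y_edges i j"
    using edge_in_petal_cases [OF j] assms(5,6) by blast+
  have "{x, z} = {x, z'}"
  proof (cases "x \<in> Y i j")
    case True
    then have "{x, z} \<notin> WU_edges i j" "{x, z'} \<notin> WU_edges i j"
      using petal_partition [OF i j] unfolding induced_def by blast+
    with e True show ?thesis
      using perfect_matching_of_unique [OF Y_matching [OF i j]] by blast
  next
    case False
    then have "{x, z} \<notin> Y_edges i j" "{x, z'} \<notin> Y_edges i j" "x \<in> W i j \<union> U i j"
      using petal_partition [OF i j] \<open>x \<in> Vs i j\<close> unfolding induced_def by blast+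
    with e show ?thesis
      using perfect_matching_between_unique [OF WU_matching [OF i j]] by blast
  qed
  with edge_distinct assms(5,6) show ?thesis
    by (auto simp: doubleton_eq_iff)
qed

lemma cross_edge_unique:
  assumes j: "j \<in> {1,2,3}" and "w \<in> W i j" "w' \<in> W i j" "y \<in> V (i+1)" "y' \<in> V (i+1)"
    and "{w, y} \<in> A" "{w', y'} \<in> A" and "w = w' \<or> y = y'"
  shows "w = w' \<and> y = y'"
proof -
  have "w \<notin> V (i+1)" "w' \<notin> V (i+1)"
    using assms(2,3) petal_parts_subset [OF i j] petal_disjoint_succ [OF i j] by blast+
  then have "{w, y} \<in> cross_edges i j" "{w', y'} \<in> cross_edges i j"
    using assms(2-7) unfolding induced_def by auto
  then have "{w, y} = {w', y'}"
    using perfect_matching_between_unique [OF cross_matching [OF i j]] assms(2-5,8) by blast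
  with \<open>w \<notin> V (i+1)\<close> assms(4,5) show ?thesis
    by (auto simp: doubleton_eq_iff)
qed

lemma W_independent:
  assumes j: "j \<in> {1,2,3}" and "w \<in> W i j" "w' \<in> W i j"
  shows "{w, w'} \<notin> A"
proof
  assume "{w, w'} \<in> A"
  moreover have "{w, w'} \<subseteq> Vs i j"
    using assms petal_parts_subset [OF i j] by blast
  ultimately have "{w, w'} \<in> WU_edges i j \<union> Y_edges i j"
    by (rule edge_in_petal_cases [OF j])
  moreover have "{w, w'} \<notin> WU_edges i j"
    using WU_edge_shape [OF j] assms petal_partition [OF i j] by (fastforce simp: doubleton_eq_iff)
  moreover have "{w, w'} \<notin> Y_edges i j"
    using assms petal_partition [OF i j] unfolding induced_def by blast
  ultimately show False
    by blast
qed

lemma petal_partner_exists: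
  assumes j: "j \<in> {1,2,3}" and x: "x \<in> Vs i j"
  shows "\<exists>x'\<in>Vs i j. x' \<noteq> x \<and> {x, x'} \<in> A"
proof -
  note parts = petal_partition [OF i j]
  consider "x \<in> Y i j" | "x \<in> W i j" | "x \<in> U i j"
    using x parts(1) by blast
  then show ?thesis
  proof cases
    case 1
    then obtain y where "y \<in> Y i j" "y \<noteq> x" "{x, y} \<in> Y_edges i j"
      using perfect_matching_of_partner [OF Y_matching [OF i j]] by blast
    then show ?thesis
      using parts(1) unfolding induced_def by blast
  next
    case 2
    then obtain u where "u \<in> U i j" "{x, u} \<in> WU_edges i j"
      using perfect_matching_between_partner (1) [OF parts(2) WU_matching [OF i j]] by blast
    moreover from this have "u \<noteq> x"
      using 2 parts(2) by blast
    ultimately show ?thesis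
      using parts(1) unfolding induced_def by blast
  next
    case 3
    then obtain w where "w \<in> W i j" "{w, x} \<in> WU_edges i j"
      using perfect_matching_between_partner (2) [OF parts(2) WU_matching [OF i j]] by blast
    moreover from this have "w \<noteq> x"
      using 3 parts(2) by blast
    ultimately show ?thesis
      using parts(1) unfolding induced_def by (auto simp: insert_commute)
  qed
qed

lemma succ_has_W_nbr:
  assumes j: "j \<in> {1,2,3}" and y: "y \<in> V (i+1)"
  shows "\<exists>w\<in>W i j. {w, y} \<in> A"
proof -
  have "W i j \<inter> V (i+1) = {}"
    using petal_parts_subset [OF i j] petal_disjoint_succ [OF i j] by blast
  from perfect_matching_between_partner (2) [OF this cross_matching [OF i j] y]
  show ?thesis
    unfolding induced_def by blast
qed

lemma W_has_U_nbr:
  assumes j: "j \<in> {1,2,3}" and w: "w \<in> W i j"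
  shows "\<exists>u\<in>U i j. {w, u} \<in> A"
  using perfect_matching_between_partner (1) [OF petal_partition(2) [OF i j] WU_matching [OF i j] w]
  unfolding induced_def by blast

lemma four_cycle_no_centre_edge:
  assumes j: "j \<in> {1,2,3}" and k: "k \<in> {1,2,3}"
    and cyc: "four_cycle A (v i j) (v i k) c d" and "c \<in> V i" "d \<in> V i"
  shows False
proof -
  note cyc' = cyc [unfolded four_cycle_def]
  have d_cases: "d \<in> R i \<or> d \<in> Vs i j"
    using centre_nbr_in_petal [OF i j, of d] cyc' \<open>d \<in> V i\<close> by (auto simp: insert_commute)
  show False
  proof (cases "c \<in> R i")
    case True
    then obtain l where l: "l \<in> {1,2,3}" "c = v i l"
      using centre_cases [OF i] by blast
    show False
    proof (cases "d \<in> R i")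
      case True
      then obtain m where "m \<in> {1,2,3}" "d = v i m"
        using centre_cases [OF i] by blast
      with j k l cyc' show False
        by auto
    next
      case False
      with d_cases have "d \<in> Vs i j" by blast
      moreover have "d \<in> Vs i l"
        using centre_nbr_in_petal [OF i l(1), of d] l(2) cyc' \<open>d \<in> V i\<close> False by blast
      moreover have "l \<noteq> j"
        using l(2) cyc' by auto
      ultimately show False
        using petals_disjoint [OF i j l(1)] by blast
    qed
  next
    case False
    then have c: "c \<in> Vs i k"
      using centre_nbr_in_petal [OF i k, of c] cyc' \<open>c \<in> V i\<close> by blast
    have "j \<noteq> k"
      using cyc' by auto
    have "d \<noteq> v i k"
      using cyc' by auto
    with petal_nbr_cases [OF k c \<open>d \<in> V i\<close>] cyc' have "d \<in> Vs i k \<or> d \<in> V (i+1)"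
      by blast
    with d_cases \<open>j \<noteq> k\<close> show False
      using centre_petal_disjoint [OF i k] centre_disjoint_succ [OF i] petal_disjoint_succ [OF i j]
        petals_disjoint [OF i j k] by blast
  qed
qed

lemma four_cycle_avoids_centre:
  assumes j: "j \<in> {1,2,3}" and cyc: "four_cycle A (v i j) b c d"
    and "b \<in> V i" "c \<in> V i" "d \<in> V i"
  shows False
proof (cases "b \<in> R i \<or> d \<in> R i")
  case True
  then show False
  proof
    assume "b \<in> R i"
    then obtain k where "k \<in> {1,2,3}" "b = v i k"
      using centre_cases [OF i] by blast
    with four_cycle_no_centre_edge [OF j] cyc assms(4,5) show False
      by blast
  next
    assume "d \<in> R i"
    then obtain k where "k \<in> {1,2,3}" "d = v i k"
      using centre_cases [OF i] by blast
    with four_cycle_no_centre_edge [OF j] four_cycle_reverse [OF cyc] assms(3,4) show False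
      by blast
  qed
next
  case False
  note cyc' = cyc [unfolded four_cycle_def]
  have b: "b \<in> Vs i j" and d: "d \<in> Vs i j"
    using centre_nbr_in_petal [OF i j] cyc' assms(3,5) False by (auto simp: insert_commute)
  have "c \<notin> Vs i j"
  proof
    assume "c \<in> Vs i j"
    with petal_partner_unique [OF j this b d] cyc' show False
      by (auto simp: insert_commute)
  qed
  moreover have "c \<noteq> v i j"
    using cyc' by auto
  ultimately have "b \<in> W i j" "d \<in> W i j" "c \<in> V (i+1)"
    using petal_nbr_cases [OF j b \<open>c \<in> V i\<close>] petal_nbr_cases [OF j d \<open>c \<in> V i\<close>] cyc'
    by (auto simp: insert_commute)
  with cross_edge_unique [OF j] cyc' have "b = d"
    by (auto simp: insert_commute)
  with cyc' show False
    by auto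
qed

lemma four_cycle_W_petal:
  assumes j: "j \<in> {1,2,3}" and a: "a \<in> W i j" and b: "b \<in> Vs i j" and "c \<notin> R i"
    and cyc: "four_cycle A a b c d" and "c \<in> V i"
  shows False
proof -
  note cyc' = cyc [unfolded four_cycle_def]
  have "c \<noteq> v i j"
    using \<open>c \<notin> R i\<close> v_in_centre [OF i j] by blast
  moreover have "c \<notin> Vs i j"
  proof
    assume "c \<in> Vs i j"
    moreover have "a \<in> Vs i j"
      using a petal_parts_subset [OF i j] by blast
    ultimately have "a = c"
      using petal_partner_unique [OF j b] cyc' by (auto simp: insert_commute)
    with cyc' show False
      by auto
  qed
  ultimately have "b \<in> W i j"
    using petal_nbr_cases [OF j b \<open>c \<in> V i\<close>] cyc' by blast
  with W_independent [OF j a] cyc' show False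
    by blast
qed

lemma four_cycle_avoids_petal:
  assumes j: "j \<in> {1,2,3}" and a: "a \<in> Vs i j" and cyc: "four_cycle A a b c d"
    and "b \<in> V i" "c \<in> V i" "d \<in> V i" and "b \<notin> R i" "c \<notin> R i" "d \<notin> R i"
  shows False
proof -
  note cyc' = cyc [unfolded four_cycle_def]
  have "b \<noteq> v i j" "d \<noteq> v i j"
    using assms(7,9) v_in_centre [OF i j] by blast+
  then have b_cases: "b \<in> Vs i j \<or> (a \<in> W i j \<and> b \<in> V (i+1))"
    and d_cases: "d \<in> Vs i j \<or> (a \<in> W i j \<and> d \<in> V (i+1))"
    using petal_nbr_cases [OF j a \<open>b \<in> V i\<close>] petal_nbr_cases [OF j a \<open>d \<in> V i\<close>] cyc'
    by (auto simp: insert_commute)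
  show False
  proof (cases "b \<in> Vs i j")
    case b: True
    show False
    proof (cases "d \<in> Vs i j")
      case True
      with petal_partner_unique [OF j a b] cyc' show False
        by (auto simp: insert_commute)
    next
      case False
      with d_cases four_cycle_W_petal [OF j _ b \<open>c \<notin> R i\<close> cyc \<open>c \<in> V i\<close>] show False
        by blast
    qed
  next
    case False
    with b_cases have aW: "a \<in> W i j" and "b \<in> V (i+1)"
      by blast+
    show False
    proof (cases "d \<in> Vs i j")
      case True
      from four_cycle_W_petal [OF j aW True \<open>c \<notin> R i\<close> four_cycle_reverse [OF cyc] \<open>c \<in> V i\<close>]
      show False .
    next
      case False
      with d_cases have "d \<in> V (i+1)"
        by blast
      with cross_edge_unique [OF j aW aW \<open>b \<in> V (i+1)\<close>] cyc' show False
        by (auto simp: insert_commute)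
    qed
  qed
qed

lemma C4_free_step:
  assumes "C4_free (induced A (V (i+1)))"
  shows "C4_free (induced A (V i))"
  unfolding C4_free_iff_no_four_cycle
proof (intro allI notI)
  fix a b c d assume "four_cycle (induced A (V i)) a b c d"
  then have cyc: "four_cycle A a b c d" and in_V: "a \<in> V i" "b \<in> V i" "c \<in> V i" "d \<in> V i"
    unfolding four_cycle_induced by blast+
  have rotations: "four_cycle A b c d a" "four_cycle A c d a b" "four_cycle A d a b c"
    using four_cycle_rotate cyc by blast+
  have not_centre: "x \<notin> R i"
    if "four_cycle A x y z w" "y \<in> V i" "z \<in> V i" "w \<in> V i" for x y z w
    using centre_cases [OF i] four_cycle_avoids_centre that by blast
  have not_R: "a \<notin> R i" "b \<notin> R i" "c \<notin> R i" "d \<notin> R i"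
    using not_centre cyc rotations in_V by blast+
  have not_petal: "x \<notin> Vs i j" if "j \<in> {1,2,3}" "four_cycle A x y z w"
    "y \<in> V i" "z \<in> V i" "w \<in> V i" "y \<notin> R i" "z \<notin> R i" "w \<notin> R i" for j x y z w
    using four_cycle_avoids_petal that by blast
  have "a \<notin> Vs i j \<and> b \<notin> Vs i j \<and> c \<notin> Vs i j \<and> d \<notin> Vs i j" if "j \<in> {1,2,3}" for j
    using not_petal [OF that] cyc rotations in_V not_R by blast
  then have "a \<in> V (i+1)" "b \<in> V (i+1)" "c \<in> V (i+1)" "d \<in> V (i+1)"
    using in_V not_R V_split [OF i] by blast+
  with cyc have "four_cycle (induced A (V (i+1))) a b c d"
    unfolding four_cycle_induced by blast
  with assms show False
    unfolding C4_free_iff_no_four_cycle by blast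
qed

lemma path_centre_succ:
  assumes j: "j \<in> {1,2,3}" and b: "b \<in> V (i+1)"
  shows "\<not> C4_free (insert {v i j, b} A)"
proof -
  obtain w where w: "w \<in> W i j" "{w, b} \<in> A"
    using succ_has_W_nbr [OF j b] by blast
  obtain u where u: "u \<in> U i j" "{w, u} \<in> A"
    using W_has_U_nbr [OF j w(1)] by blast
  have "u \<in> Vs i j" "w \<in> Vs i j" "u \<noteq> w"
    using u(1) w(1) petal_parts_subset [OF i j] petal_partition (2) [OF i j] by blast+
  with b v_in_centre [OF i j] centre_petal_disjoint [OF i j] centre_disjoint_succ [OF i]
    petal_disjoint_succ [OF i j]
  have "distinct [v i j, u, w, b]"
    by auto
  moreover have "{u, w} \<in> A"
    using u(2) by (simp add: insert_commute)
  ultimately show ?thesis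
    using star_edge [OF i j \<open>u \<in> Vs i j\<close>] w(2) by (intro not_C4_free_insert_path)
qed

lemma path_centre_petal:
  assumes j: "j \<in> {1,2,3}" and k: "k \<in> {1,2,3}" "k \<noteq> j" and b: "b \<in> Vs i k"
  shows "\<not> C4_free (insert {v i j, b} A)"
proof -
  obtain b' where b': "b' \<in> Vs i k" "b' \<noteq> b" "{b, b'} \<in> A"
    using petal_partner_exists [OF k(1) b] by blast
  have "v i j \<noteq> v i k"
    using v_inj [OF i j k(1)] k(2) by auto
  moreover have "v i j \<notin> Vs i k" "v i k \<notin> Vs i k"
    using v_in_centre [OF i j] v_in_centre [OF i k(1)] centre_petal_disjoint [OF i k(1)] by blast+
  ultimately have "distinct [v i j, v i k, b', b]"
    using b b' by auto
  moreover have "{b', b} \<in> A"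
    using b'(3) by (simp add: insert_commute)
  ultimately show ?thesis
    using centre_edge [OF i j k(1)] star_edge [OF i k(1) b'(1)] k(2)
    by (intro not_C4_free_insert_path) auto
qed

lemma path_petal_succ:
  assumes j: "j \<in> {1,2,3}" and a: "a \<in> Vs i j" and b: "b \<in> V (i+1)" and "{a, b} \<notin> A"
  shows "\<not> C4_free (insert {a, b} A)"
proof -
  obtain w where w: "w \<in> W i j" "{w, b} \<in> A"
    using succ_has_W_nbr [OF j b] by blast
  have "w \<in> Vs i j"
    using w(1) petal_parts_subset [OF i j] by blast
  moreover have "w \<noteq> a"
    using w(2) \<open>{a, b} \<notin> A\<close> by blast
  ultimately have "distinct [a, v i j, w, b]"
    using a b v_in_centre [OF i j] centre_petal_disjoint [OF i j] centre_disjoint_succ [OF i]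
      petal_disjoint_succ [OF i j] by auto
  moreover have "{a, v i j} \<in> A"
    using star_edge [OF i j a] by (simp add: insert_commute)
  ultimately show ?thesis
    using star_edge [OF i j \<open>w \<in> Vs i j\<close>] w(2) by (intro not_C4_free_insert_path)
qed

lemma path_petal_same:
  assumes j: "j \<in> {1,2,3}" and a: "a \<in> Vs i j" and b: "b \<in> Vs i j" and "a \<noteq> b" "{a, b} \<notin> A"
  shows "\<not> C4_free (insert {a, b} A)"
proof -
  obtain a' where a': "a' \<in> Vs i j" "a' \<noteq> a" "{a, a'} \<in> A"
    using petal_partner_exists [OF j a] by blast
  have "a' \<noteq> b"
    using a'(3) \<open>{a, b} \<notin> A\<close> by blast
  moreover have "v i j \<notin> Vs i j"
    using v_in_centre [OF i j] centre_petal_disjoint [OF i j] by blast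
  ultimately have "distinct [a, a', v i j, b]"
    using a b a' \<open>a \<noteq> b\<close> by auto
  moreover have "{a', v i j} \<in> A"
    using star_edge [OF i j a'(1)] by (simp add: insert_commute)
  ultimately show ?thesis
    using a'(3) star_edge [OF i j b] by (intro not_C4_free_insert_path)
qed

lemma path_petal_petal:
  assumes j: "j \<in> {1,2,3}" and k: "k \<in> {1,2,3}" "k \<noteq> j" and a: "a \<in> Vs i j" and b: "b \<in> Vs i k"
  shows "\<not> C4_free (insert {a, b} A)"
proof -
  have "v i j \<noteq> v i k"
    using v_inj [OF i j k(1)] k(2) by auto
  moreover have "a \<noteq> b"
    using a b petals_disjoint [OF i j k(1)] k(2) by blast
  ultimately have "distinct [a, v i j, v i k, b]"
    using a b v_in_centre [OF i j] v_in_centre [OF i k(1)] centre_petal_disjoint [OF i j]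
      centre_petal_disjoint [OF i k(1)] by auto
  moreover have "{a, v i j} \<in> A"
    using star_edge [OF i j a] by (simp add: insert_commute)
  ultimately show ?thesis
    using centre_edge [OF i j k(1)] star_edge [OF i k(1) b] k(2) by (intro not_C4_free_insert_path) auto
qed

lemma saturating_at_centre:
  assumes j: "j \<in> {1,2,3}" and b: "b \<in> V i" and "v i j \<noteq> b" "{v i j, b} \<notin> A"
  shows "\<not> C4_free (insert {v i j, b} A)"
proof -
  consider "b \<in> V (i+1)" | "b \<in> R i" | k where "k \<in> {1,2,3}" "b \<in> Vs i k"
    using b V_split [OF i] by blast
  then show ?thesis
  proof cases
    case 1
    then show ?thesis
      by (rule path_centre_succ [OF j])
  next
    case 2
    then obtain k where k: "k \<in> {1,2,3}" "b = v i k"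
      using centre_cases [OF i] by blast
    with \<open>v i j \<noteq> b\<close> have "j \<noteq> k"
      by auto
    with centre_edge [OF i j k(1)] k(2) \<open>{v i j, b} \<notin> A\<close> show ?thesis
      by simp
  next
    case (3 k)
    with star_edge [OF i j] \<open>{v i j, b} \<notin> A\<close> have "k \<noteq> j"
      by blast
    with path_centre_petal [OF j 3(1)] 3(2) show ?thesis
      by blast
  qed
qed

lemma saturating_at_petal:
  assumes j: "j \<in> {1,2,3}" and a: "a \<in> Vs i j" and b: "b \<in> V i" "b \<notin> R i"
    and "a \<noteq> b" "{a, b} \<notin> A"
  shows "\<not> C4_free (insert {a, b} A)"
proof -
  consider "b \<in> V (i+1)" | k where "k \<in> {1,2,3}" "b \<in> Vs i k"
    using b V_split [OF i] by blast
  then show ?thesis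
  proof cases
    case 1
    with path_petal_succ [OF j a] \<open>{a, b} \<notin> A\<close> show ?thesis
      by blast
  next
    case (2 k)
    then show ?thesis
      using path_petal_same [OF j a] path_petal_petal [OF j 2(1) _ a 2(2)] assms(5,6) by blast
  qed
qed

lemma saturating_at_level:
  assumes a: "a \<in> V i" "a \<notin> V (i+1)" and b: "b \<in> V i" and "a \<noteq> b" "{a, b} \<notin> A"
  shows "\<not> C4_free (insert {a, b} A)"
proof (cases "a \<in> R i")
  case True
  with centre_cases [OF i] saturating_at_centre b assms(4,5) show ?thesis
    by blast
next
  case False
  then obtain j where j: "j \<in> {1,2,3}" "a \<in> Vs i j"
    using a V_split [OF i] by blast
  show ?thesis
  proof (cases "b \<in> R i")
    case True
    then obtain k where k: "k \<in> {1,2,3}" "b = v i k"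
      using centre_cases [OF i] by blast
    with saturating_at_centre [OF k(1) a(1)] assms(4,5) show ?thesis
      by (simp add: insert_commute)
  next
    case False
    with saturating_at_petal [OF j b] assms(4,5) show ?thesis
      by blast
  qed
qed

lemma card_triangle: "card (triangle i) = 3"
proof -
  have "triangle i = {{v i 1, v i 2}, {v i 2, v i 3}, {v i 1, v i 3}}"
  proof (intro equalityI subsetI)
    fix e assume e: "e \<in> triangle i"
    then obtain x y where "x \<noteq> y" "e = {x, y}"
      using edge_of_A by blast
    with e centre_eq [OF i] show "e \<in> {{v i 1, v i 2}, {v i 2, v i 3}, {v i 1, v i 3}}"
      by (auto simp: insert_commute)
  next
    fix e assume "e \<in> {{v i 1, v i 2}, {v i 2, v i 3}, {v i 1, v i 3}}"
    with triangle_edges [OF i] centre_eq [OF i] show "e \<in> triangle i"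
      by auto
  qed
  with centre_distinct [OF i] show ?thesis
    by (simp add: doubleton_eq_iff)
qed

lemma petal_edge_bounds:
  assumes j: "j \<in> {1,2,3}" and e: "e \<in> petal_edges i j"
  shows "e \<subseteq> R i \<union> Vs i j \<union> V (i+1)" "e \<inter> Vs i j \<noteq> {}"
proof -
  have "e \<subseteq> R i \<union> Vs i j \<union> V (i+1) \<and> e \<inter> Vs i j \<noteq> {}"
    using e
  proof (elim UnE)
    assume "e \<in> star i j"
    with v_in_centre [OF i j] show ?thesis
      by blast
  next
    assume "e \<in> cross_edges i j"
    with cross_edge_shape [OF j] petal_parts_subset [OF i j] show ?thesis
      by blast
  next
    assume "e \<in> WU_edges i j"
    with WU_edge_shape [OF j] petal_parts_subset [OF i j] show ?thesis
      by blast
  next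
    assume "e \<in> Y_edges i j"
    with perfect_matching_of_edge [OF Y_matching [OF i j]] petal_parts_subset [OF i j] show ?thesis
      by blast
  qed
  then show "e \<subseteq> R i \<union> Vs i j \<union> V (i+1)" "e \<inter> Vs i j \<noteq> {}"
    by blast+
qed

lemma card_petal_edges_sum:
  assumes j: "j \<in> {1,2,3}"
  shows "card (petal_edges i j)
    = card (star i j) + card (cross_edges i j) + card (WU_edges i j) + card (Y_edges i j)"
proof -
  have "star i j \<inter> cross_edges i j = {}" "star i j \<inter> WU_edges i j = {}" "star i j \<inter> Y_edges i j = {}"
    using v_in_centre [OF i j] centre_petal_disjoint [OF i j] centre_disjoint_succ [OF i]
      petal_parts_subset [OF i j] unfolding induced_def by blast+
  moreover have "cross_edges i j \<inter> WU_edges i j = {}" "cross_edges i j \<inter> Y_edges i j = {}"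
  proof -
    have "e \<inter> V (i+1) \<noteq> {}" if "e \<in> cross_edges i j" for e
      using cross_edge_shape [OF j that] by blast
    with WU_Y_edges_in_petal [OF j] petal_disjoint_succ [OF i j]
    show "cross_edges i j \<inter> WU_edges i j = {}" "cross_edges i j \<inter> Y_edges i j = {}"
      by blast+
  qed
  moreover have "WU_edges i j \<inter> Y_edges i j = {}"
  proof -
    have "e \<inter> W i j \<noteq> {}" if "e \<in> WU_edges i j" for e
      using WU_edge_shape [OF j that] by blast
    with petal_partition (3) [OF i j] show ?thesis
      unfolding induced_def by blast
  qed
  moreover have "finite (star i j)" "finite (cross_edges i j)" "finite (WU_edges i j)" "finite (Y_edges i j)"
    using finite_petal [OF i j] finite_A unfolding induced_def by auto
  ultimately show ?thesis
    by (simp add: card_Un_disjoint Int_Un_distrib2)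
qed

lemma card_petal_edges:
  assumes j: "j \<in> {1,2,3}"
  shows "2 * card (petal_edges i j) = 3 * card (Vs i j) + 2 * card (V (i+1))"
proof -
  note parts = petal_partition [OF i j] and sub = petal_parts_subset [OF i j]
  have fin: "finite (W i j)" "finite (U i j)" "finite (Y i j)"
    using finite_petal [OF i j] sub finite_subset by blast+
  have "v i j \<notin> Vs i j"
    using v_in_centre [OF i j] centre_petal_disjoint [OF i j] by blast
  then have "card (star i j) = card (Vs i j)"
    by (intro card_image inj_onI) (auto simp: doubleton_eq_iff)
  moreover have "W i j \<inter> V (i+1) = {}"
    using sub petal_disjoint_succ [OF i j] by blast
  then have "card (V (i+1)) = card (cross_edges i j)"
    using cross_matching [OF i j] by (rule perfect_matching_between_card_right)
  moreover have "card (W i j \<union> U i j) = 2 * card (WU_edges i j)"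
    using fin parts(2) WU_matching [OF i j]
    by (intro perfect_matching_of_card perfect_matching_between_imp_of) auto
  moreover have "card (Y i j) = 2 * card (Y_edges i j)"
    using fin Y_matching [OF i j] by (intro perfect_matching_of_card)
  moreover have "card (Vs i j) = card (W i j \<union> U i j) + card (Y i j)"
    using fin parts by (simp add: card_Un_disjoint Int_Un_distrib2)
  ultimately show ?thesis
    using card_petal_edges_sum [OF j] by linarith
qed

lemma card_V_split: "card (V i) = card (V (i+1)) + 3 + card (Vs i 1) + card (Vs i 2) + card (Vs i 3)"
proof -
  have "finite (V i)"
    using finite_V i by simp
  with finite_petal [OF i] have fin:
    "finite (V (i+1))" "finite (R i)" "finite (Vs i 1)" "finite (Vs i 2)" "finite (Vs i 3)"
    using V_succ_subset [OF i] centre_subset [OF i] finite_subset by auto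
  have disj: "V (i+1) \<inter> R i = {}" "V (i+1) \<inter> Vs i j = {}" "R i \<inter> Vs i j = {}"
    if "j \<in> {1,2,3}" for j
    using centre_disjoint_succ [OF i] petal_disjoint_succ [OF i that] centre_petal_disjoint [OF i that]
    by blast+
  have "Vs i 1 \<inter> Vs i 2 = {}" "Vs i 1 \<inter> Vs i 3 = {}" "Vs i 2 \<inter> Vs i 3 = {}"
    using petals_disjoint [OF i] by simp_all
  with fin disj [of 1] disj [of 2] disj [of 3] card_centre [OF i] show ?thesis
    unfolding V_split [OF i] by (simp add: card_Un_disjoint Int_Un_distrib2 Int_Un_distrib)
qed

lemma card_layer: "2 * card (layer i) + 3 = 3 * card (V i) + 3 * card (V (i+1))"
proof -
  have fin: "finite (petal_edges i j)" if "j \<in> {1,2,3}" for j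
  proof (rule finite_subset [OF _ finite_A])
    show "petal_edges i j \<subseteq> A"
      using star_edge [OF i that] unfolding induced_def by blast
  qed
  have "triangle i \<inter> petal_edges i j = {}" if "j \<in> {1,2,3}" for j
  proof (rule equals0I)
    fix e assume "e \<in> triangle i \<inter> petal_edges i j"
    then have "e \<subseteq> R i" "e \<in> petal_edges i j"
      by blast+
    with petal_edge_bounds (2) [OF that] centre_petal_disjoint [OF i that] show False
      by blast
  qed
  moreover have "petal_edges i j \<inter> petal_edges i k = {}"
    if "j \<in> {1,2,3}" "k \<in> {1,2,3}" "j \<noteq> k" for j k
  proof (rule equals0I)
    fix e assume "e \<in> petal_edges i j \<inter> petal_edges i k"
    then have "e \<inter> Vs i j \<noteq> {}" "e \<subseteq> R i \<union> Vs i k \<union> V (i+1)"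
      using petal_edge_bounds [OF that(1)] petal_edge_bounds [OF that(2)] IntD1 IntD2 by metis+
    with petals_disjoint [OF i that] centre_petal_disjoint [OF i that(1)] petal_disjoint_succ [OF i that(1)]
    show False
      by blast
  qed
  ultimately have "card (layer i) = card (triangle i) + card (petal_edges i 1)
      + card (petal_edges i 2) + card (petal_edges i 3)"
    unfolding layer_eq [OF i] using fin finite_A
    by (simp add: card_Un_disjoint Int_Un_distrib Int_Un_distrib2)
  with card_triangle card_petal_edges card_V_split show ?thesis
    by simp
qed

lemma card_induced_V_step:
  "card (induced A (V i)) = card (induced A (V (i+1))) + card (layer i)"
proof -
  have "induced A (V (i+1)) \<subseteq> induced A (V i)"
    using V_succ_subset [OF i] unfolding induced_def by blast
  moreover have "finite (induced A (V i))"
    using finite_A unfolding induced_def by simp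
  ultimately show ?thesis
    by (metis card_Diff_subset card_mono finite_subset le_add_diff_inverse)
qed

end

lemma C4_free_induced_V:
  assumes "1 \<le> k" "k \<le> r + 1"
  shows "C4_free (induced A (V k))"
  using assms(2,1)
proof (induction k rule: inc_induct)
  case base
  then show ?case
    using core_saturated unfolding C4_saturated_def by blast
next
  case (step m)
  then show ?case
    using C4_free_step [of m] by simp
qed

lemma C4_free_A: "C4_free A"
  using C4_free_induced_V [of 1] induced_V_1 by simp

lemma non_edge_creates_C4:
  assumes e: "e \<in> G - A"
  shows "\<not> C4_free (insert e A)"
proof -
  obtain a b where ab: "a \<noteq> b" "e = {a, b}" "a \<in> {1..n}" "b \<in> {1..n}"
    using graph e unfolding graph_on_def by blast
  show ?thesis
  proof (cases "e \<subseteq> V (r+1)")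
    case True
    then have "e \<in> induced G (V (r+1)) - induced A (V (r+1))"
      using e unfolding induced_def by blast
    then have "\<not> C4_free (insert e (induced A (V (r+1))))"
      using core_saturated unfolding C4_saturated_def by blast
    moreover have "insert e (induced A (V (r+1))) \<subseteq> insert e A"
      unfolding induced_def by blast
    ultimately show ?thesis
      using C4_free_subset by blast
  next
    case False
    have "e \<subseteq> V 1"
      using ab V_1 by simp
    then obtain i where i: "i \<in> {1..r}" "e \<subseteq> V i" "\<not> e \<subseteq> V (i+1)"
      using False by (rule exists_level_exit)
    have "{a, b} \<notin> A"
      using e ab(2) by blast
    show ?thesis
    proof (cases "a \<in> V (i+1)")
      case True
      with i ab have "b \<notin> V (i+1)"
        by blast
      with saturating_at_level [OF i(1), of b a] i ab \<open>{a, b} \<notin> A\<close> show ?thesis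
        by (simp add: insert_commute)
    next
      case False
      with saturating_at_level [OF i(1), of a b] i ab \<open>{a, b} \<notin> A\<close> show ?thesis
        by simp
    qed
  qed
qed

lemma C4_saturated_A: "C4_saturated G A"
  unfolding C4_saturated_def using A_subset_G C4_free_A non_edge_creates_C4 by blast

lemma card_A:
  "real (card A) = real (card (induced A (V (r+1))))
    + 3/2 * (real n - real (card (V (r+1))) - real r)
    + 3 * (\<Sum>i=2..r+1. real (card (V i)))"
proof -
  have "2 * card (induced A (V i)) + 3
      = 2 * card (induced A (V (i+1))) + 3 * card (V i) + 3 * card (V (i+1))"
    if "i \<in> {1..r}" for i
    using card_layer [OF that] card_induced_V_step [OF that] by simp
  then have "2 * real (card (induced A (V i))) + 3
      = 2 * real (card (induced A (V (i+1)))) + 3 * real (card (V i)) + 3 * real (card (V (i+1)))"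
    if "i \<in> {1..r}" for i
    using that by (metis (mono_tags) of_nat_add of_nat_mult of_nat_numeral)
  then have "real (card (induced A (V 1))) = real (card (induced A (V (r+1))))
      + 3/2 * (real (card (V 1)) - real (card (V (r+1))) - real r)
      + 3 * (\<Sum>i=2..r+1. real (card (V i)))"
    by (rule flower_count_telescope [where a = "\<lambda>k. real (card (induced A (V k)))"
          and c = "\<lambda>k. real (card (V k))"])
  then show ?thesis
    using induced_V_1 V_1 by simp
qed

end

theorem lemma6:
  fixes n r :: nat and G A :: "nat set set"
    and V R :: "nat \<Rightarrow> nat set" and v :: "nat \<Rightarrow> nat \<Rightarrow> nat"
    and Vs W U Y :: "nat \<Rightarrow> nat \<Rightarrow> nat set"
  assumes "graph_on n G"
    and "A \<subseteq> G"
    and "is_flower n G A r V R v Vs W U Y"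
  shows "C4_saturated G A \<and>
    real (card A) = real (card (induced A (V (r+1))))
      + 3/2 * (real n - real (card (V (r+1))) - real r)
      + 3 * (\<Sum>i=2..r+1. real (card (V i)))"
proof -
  interpret flower n G A r V R v Vs W U Y
    using assms unfolding flower_iff by blast
  show ?thesis
    using C4_saturated_A card_A by blast
qed

end
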